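(* Every $\alpha$-pairing can be transformed by the moves $M_1,M_2$ into a primitive $\alpha$-pairing. Two homologous primitive $\alpha$-pairings are isomorphic.
   Context: Fix a set $\alpha$ with an involution $\tau$, and let $\pi$ be the multiplicative abelian group generated by the elements of $\alpha$ with relations $a\,\tau(a)=1$. A pairing $b:S\times S\to\pi$ is skew-symmetric if $b(A,B)=b(B,A)^{-1}$ and $b(A,A)=1$ for all $A,B$. An $\alpha$-pairing is a triple $(S,s,b)$: a set $S$ with a distinguished element $s\in S$, a map $S\setminus\{s\}\to\alpha$, $A\mapsto|A|$, and a skew-symmetric pairing $b:S\times S\to\pi$. Two $\alpha$-pairings $(S,s,b),(S',s',b')$ are isomorphic if there is a bijection $S\to S'$ sending $s$ to $s'$, preserving $|\cdot|$ on $S\setminus\{s\}$, and carrying $b$ to $b'$. An element $A\in S\setminus\{s\}$ is annihilating if $b(A,C)=1$ for all $C\in S$. Elements $A,B\in S\setminus\{s\}$ are twins if $|A|=\tau(|B|)$ and $b(A,C)=b(B,C)$ for all $C\in S$. Move $M_1$ deletes an annihilating element $A$, replacing $(S,s,b)$ by $(S\setminus\{A\},s,b|)$; move $M_2$ deletes a pair of twins $A,B$, replacing $(S,s,b)$ by $(S\setminus\{A,B\},s,b|)$. Two $\alpha$-pairings are homologous if they are related by a finite sequence of moves $M_1,M_2$, their inverses, and isomorphisms. An $\alpha$-pairing is primitive if it has no annihilating elements and no pairs of twins. *)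

theory Defs
  imports Main "HOL-Library.Poly_Mapping"
begin

text \<open>The group pi: written additively. Elements are represented by the free abelian
group on the alphabet type 'a (finitely supported maps 'a to int); two representatives
denote the same element of pi iff their difference lies in the subgroup generated by
the relators a + tau(a). The unit 1 of pi corresponds to 0, inverse to negation.\<close>

inductive_set pi_rels :: "('a \<Rightarrow> 'a) \<Rightarrow> ('a \<Rightarrow>\<^sub>0 int) set" for \<tau> :: "'a \<Rightarrow> 'a" where
  zero: "0 \<in> pi_rels \<tau>"
| add: "x \<in> pi_rels \<tau> \<Longrightarrow> x + (Poly_Mapping.single a 1 + Poly_Mapping.single (\<tau> a) 1) \<in> pi_rels \<tau>"
| sub: "x \<in> pi_rels \<tau> \<Longrightarrow> x - (Poly_Mapping.single a 1 + Poly_Mapping.single (\<tau> a) 1) \<in> pi_rels \<tau>"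

definition pi_eq :: "('a \<Rightarrow> 'a) \<Rightarrow> ('a \<Rightarrow>\<^sub>0 int) \<Rightarrow> ('a \<Rightarrow>\<^sub>0 int) \<Rightarrow> bool" where
  "pi_eq \<tau> x y \<longleftrightarrow> x - y \<in> pi_rels \<tau>"

text \<open>An alpha-pairing (S, s, |.|, b): carrier S, distinguished element s,
labelling |.| (relevant on S - {s}), pairing b (relevant on S x S).\<close>

type_synonym ('x, 'a) apairing = "'x set \<times> 'x \<times> ('x \<Rightarrow> 'a) \<times> ('x \<Rightarrow> 'x \<Rightarrow> ('a \<Rightarrow>\<^sub>0 int))"

fun is_apairing :: "('a \<Rightarrow> 'a) \<Rightarrow> ('x, 'a) apairing \<Rightarrow> bool" where
  "is_apairing \<tau> (S, s, l, b) \<longleftrightarrow> finite S \<and> s \<in> S \<and>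
     (\<forall>A\<in>S. \<forall>B\<in>S. pi_eq \<tau> (b A B) (- b B A)) \<and>
     (\<forall>A\<in>S. pi_eq \<tau> (b A A) 0)"

fun apairing_iso :: "('a \<Rightarrow> 'a) \<Rightarrow> ('x, 'a) apairing \<Rightarrow> ('x, 'a) apairing \<Rightarrow> bool" where
  "apairing_iso \<tau> (S, s, l, b) (S', s', l', b') \<longleftrightarrow>
     (\<exists>f. bij_betw f S S' \<and> f s = s' \<and> (\<forall>A\<in>S - {s}. l' (f A) = l A) \<and>
          (\<forall>A\<in>S. \<forall>B\<in>S. pi_eq \<tau> (b' (f A) (f B)) (b A B)))"

fun annihilating :: "('a \<Rightarrow> 'a) \<Rightarrow> ('x, 'a) apairing \<Rightarrow> 'x \<Rightarrow> bool" where
  "annihilating \<tau> (S, s, l, b) A \<longleftrightarrow> A \<in> S - {s} \<and> (\<forall>C\<in>S. pi_eq \<tau> (b A C) 0)"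

fun twins :: "('a \<Rightarrow> 'a) \<Rightarrow> ('x, 'a) apairing \<Rightarrow> 'x \<Rightarrow> 'x \<Rightarrow> bool" where
  "twins \<tau> (S, s, l, b) A B \<longleftrightarrow> A \<in> S - {s} \<and> B \<in> S - {s} \<and> A \<noteq> B \<and>
     l A = \<tau> (l B) \<and> (\<forall>C\<in>S. pi_eq \<tau> (b A C) (b B C))"

fun move_M1 :: "('a \<Rightarrow> 'a) \<Rightarrow> ('x, 'a) apairing \<Rightarrow> ('x, 'a) apairing \<Rightarrow> bool" where
  "move_M1 \<tau> (S, s, l, b) Q \<longleftrightarrow>
     (\<exists>A. annihilating \<tau> (S, s, l, b) A \<and> Q = (S - {A}, s, l, b))"

fun move_M2 :: "('a \<Rightarrow> 'a) \<Rightarrow> ('x, 'a) apairing \<Rightarrow> ('x, 'a) apairing \<Rightarrow> bool" where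
  "move_M2 \<tau> (S, s, l, b) Q \<longleftrightarrow>
     (\<exists>A B. twins \<tau> (S, s, l, b) A B \<and> Q = (S - {A, B}, s, l, b))"

definition apairing_move :: "('a \<Rightarrow> 'a) \<Rightarrow> ('x, 'a) apairing \<Rightarrow> ('x, 'a) apairing \<Rightarrow> bool" where
  "apairing_move \<tau> P Q \<longleftrightarrow> move_M1 \<tau> P Q \<or> move_M2 \<tau> P Q"

definition primitive :: "('a \<Rightarrow> 'a) \<Rightarrow> ('x, 'a) apairing \<Rightarrow> bool" where
  "primitive \<tau> P \<longleftrightarrow> (\<nexists>A. annihilating \<tau> P A) \<and> (\<nexists>A B. twins \<tau> P A B)"

definition homology_step :: "('a \<Rightarrow> 'a) \<Rightarrow> ('x, 'a) apairing \<Rightarrow> ('x, 'a) apairing \<Rightarrow> bool" where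
  "homology_step \<tau> P Q \<longleftrightarrow> is_apairing \<tau> P \<and> is_apairing \<tau> Q \<and>
     (apairing_move \<tau> P Q \<or> apairing_move \<tau> Q P \<or> apairing_iso \<tau> P Q)"

definition homologous :: "('a \<Rightarrow> 'a) \<Rightarrow> ('x, 'a) apairing \<Rightarrow> ('x, 'a) apairing \<Rightarrow> bool" where
  "homologous \<tau> = (homology_step \<tau>)\<^sup>*\<^sup>*"

end

theory Submission
  imports Defs
begin

text \<open>Every move deletes elements, so sequences of moves terminate and every
\<alpha>-pairing reduces to a primitive one. Moves are transported along isomorphisms, and
two moves out of the same \<alpha>-pairing can always be continued to isomorphic results: the
only case that is not a plain commutation is that of two pairs of twins {X, Y} and
{X, Z} sharing an element, where Y and Z have the same label and the same row, so the
transposition of Y and Z is an isomorphism between the two results. Newman's lemma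
modulo isomorphism then makes the primitive reduct unique up to isomorphism; it is
therefore unchanged by moves, inverse moves and isomorphisms, so homologous primitive
\<alpha>-pairings are isomorphic.\<close>

section \<open>Terminating rewriting that is locally confluent modulo an equivalence\<close>

locale terminating_locally_confluent_modulo =
  fixes valid :: "'p \<Rightarrow> bool" and step :: "'p \<Rightarrow> 'p \<Rightarrow> bool"
    and eqv :: "'p \<Rightarrow> 'p \<Rightarrow> bool" and weight :: "'p \<Rightarrow> nat"
  assumes step_valid: "valid p \<Longrightarrow> step p q \<Longrightarrow> valid q"
    and step_weight_less: "valid p \<Longrightarrow> step p q \<Longrightarrow> weight q < weight p"
    and eqv_refl: "eqv p p"
    and eqv_sym: "valid p \<Longrightarrow> eqv p q \<Longrightarrow> eqv q p"
    and eqv_trans: "valid p \<Longrightarrow> eqv p q \<Longrightarrow> eqv q r \<Longrightarrow> eqv p r"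
    and eqv_step: "valid p \<Longrightarrow> eqv p p' \<Longrightarrow> step p q \<Longrightarrow> \<exists>q'. step p' q' \<and> eqv q q'"
    and local_confluence: "valid p \<Longrightarrow> step p q\<^sub>1 \<Longrightarrow> step p q\<^sub>2 \<Longrightarrow>
      \<exists>r\<^sub>1 r\<^sub>2. step\<^sup>*\<^sup>* q\<^sub>1 r\<^sub>1 \<and> step\<^sup>*\<^sup>* q\<^sub>2 r\<^sub>2 \<and> eqv r\<^sub>1 r\<^sub>2"
begin

definition normal :: "'p \<Rightarrow> bool" where
  "normal p \<longleftrightarrow> (\<nexists>q. step p q)"

lemma steps_valid: "step\<^sup>*\<^sup>* p q \<Longrightarrow> valid p \<Longrightarrow> valid q"
  by (induction rule: rtranclp_induct) (auto intro: step_valid)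

lemma normal_steps_eq: "step\<^sup>*\<^sup>* p q \<Longrightarrow> normal p \<Longrightarrow> q = p"
  by (induction rule: converse_rtranclp_induct) (auto simp: normal_def)

lemma normal_form_exists: "valid p \<Longrightarrow> \<exists>n. step\<^sup>*\<^sup>* p n \<and> normal n"
proof (induction "weight p" arbitrary: p rule: less_induct)
  case less
  show ?case
  proof (cases "normal p")
    case False
    then obtain q where "step p q" by (auto simp: normal_def)
    moreover obtain n where "step\<^sup>*\<^sup>* q n" "normal n"
      using less step_valid step_weight_less \<open>step p q\<close> by blast
    ultimately show ?thesis by (meson converse_rtranclp_into_rtranclp)
  qed blast
qed

lemma eqv_steps:
  assumes "step\<^sup>*\<^sup>* p q" "valid p" "eqv p p'"
  shows "\<exists>q'. step\<^sup>*\<^sup>* p' q' \<and> eqv q q'"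
  using assms
proof (induction rule: rtranclp_induct)
  case (step q r)
  then obtain q' where "step\<^sup>*\<^sup>* p' q'" "eqv q q'" by blast
  moreover obtain r' where "step q' r'" "eqv r r'"
    using eqv_step steps_valid step \<open>eqv q q'\<close> by blast
  ultimately show ?case by (meson rtranclp.rtrancl_into_rtrancl)
qed blast

lemma eqv_normal:
  assumes "valid p" "valid p'" "eqv p p'" "normal p"
  shows "normal p'"
  using eqv_step[OF assms(2) eqv_sym[OF assms(1,3)]] assms(4) by (auto simp: normal_def)

lemma normal_form_unique:
  assumes "valid p" "step\<^sup>*\<^sup>* p n\<^sub>1" "step\<^sup>*\<^sup>* p n\<^sub>2" "normal n\<^sub>1" "normal n\<^sub>2"
  shows "eqv n\<^sub>1 n\<^sub>2"
  using assms
proof (induction "weight p" arbitrary: p n\<^sub>1 n\<^sub>2 rule: less_induct)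
  case less
  show ?case
  proof (cases "normal p")
    case True
    then show ?thesis using less.prems normal_steps_eq eqv_refl by metis
  next
    case False
    have first_step: "\<exists>q. step p q \<and> step\<^sup>*\<^sup>* q n" if "step\<^sup>*\<^sup>* p n" "normal n" for n
      using that False by (cases rule: converse_rtranclpE) blast+
    obtain q\<^sub>1 q\<^sub>2 where q: "step p q\<^sub>1" "step\<^sup>*\<^sup>* q\<^sub>1 n\<^sub>1" "step p q\<^sub>2" "step\<^sup>*\<^sup>* q\<^sub>2 n\<^sub>2"
      using first_step less.prems by meson
    have valid_q: "valid q\<^sub>1" "valid q\<^sub>2" and weight_q: "weight q\<^sub>1 < weight p" "weight q\<^sub>2 < weight p"
      using q less.prems(1) step_valid step_weight_less by blast+
    obtain r\<^sub>1 r\<^sub>2 where r: "step\<^sup>*\<^sup>* q\<^sub>1 r\<^sub>1" "step\<^sup>*\<^sup>* q\<^sub>2 r\<^sub>2" "eqv r\<^sub>1 r\<^sub>2"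
      using local_confluence less.prems(1) q by blast
    have valid_r: "valid r\<^sub>1" "valid r\<^sub>2" using r valid_q steps_valid by blast+
    obtain m\<^sub>1 where m\<^sub>1: "step\<^sup>*\<^sup>* r\<^sub>1 m\<^sub>1" "normal m\<^sub>1"
      using normal_form_exists valid_r by blast
    obtain m\<^sub>2 where m\<^sub>2: "step\<^sup>*\<^sup>* r\<^sub>2 m\<^sub>2" "eqv m\<^sub>1 m\<^sub>2"
      using eqv_steps m\<^sub>1(1) valid_r r(3) by blast
    have valid_m: "valid m\<^sub>1" "valid m\<^sub>2" using m\<^sub>1 m\<^sub>2 valid_r steps_valid by blast+
    have "normal m\<^sub>2" using eqv_normal valid_m m\<^sub>1 m\<^sub>2 by blast
    have "eqv n\<^sub>1 m\<^sub>1"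
      using less.hyps weight_q valid_q q r m\<^sub>1 less.prems by (meson rtranclp_trans)
    moreover have "eqv n\<^sub>2 m\<^sub>2"
      using less.hyps weight_q valid_q q r m\<^sub>2 \<open>normal m\<^sub>2\<close> less.prems by (meson rtranclp_trans)
    moreover have "valid n\<^sub>1" "valid n\<^sub>2" using q valid_q steps_valid by blast+
    ultimately show ?thesis using m\<^sub>2(2) eqv_sym eqv_trans by meson
  qed
qed

lemma homologous_normal_forms_eqv:
  assumes "(\<lambda>p q. valid p \<and> valid q \<and> (step p q \<or> step q p \<or> eqv p q))\<^sup>*\<^sup>* p q" "valid p"
    and "step\<^sup>*\<^sup>* p n" "normal n" "step\<^sup>*\<^sup>* q m" "normal m"
  shows "eqv n m"
  using assms(1,5,6)
proof (induction arbitrary: m rule: rtranclp_induct)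
  case base
  then show ?case using normal_form_unique assms(2-4) by blast
next
  case (step q q')
  then have valid: "valid q" "valid q'" by blast+
  obtain k where k: "step\<^sup>*\<^sup>* q k" "normal k" using normal_form_exists valid by blast
  consider "step q q' \<or> step q' q" | "eqv q q'" using step.hyps(2) by blast
  then have "eqv k m"
  proof cases
    case 1
    then show ?thesis using normal_form_unique valid k step.prems
      by (meson converse_rtranclp_into_rtranclp)
  next
    case 2
    then obtain k' where "step\<^sup>*\<^sup>* q' k'" "eqv k k'" using eqv_steps k valid by blast
    moreover have "valid k" "valid k'" using k valid steps_valid \<open>step\<^sup>*\<^sup>* q' k'\<close> by blast+
    moreover have "normal k'" using eqv_normal k calculation by blast
    ultimately show ?thesis using normal_form_unique valid step.prems eqv_trans by meson
  qed
  moreover have "valid n" using assms(2,3) steps_valid by blast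
  ultimately show ?case using step.IH k eqv_trans by blast
qed

end

lemma pi_rels_add:
  assumes "x \<in> pi_rels \<tau>" "y \<in> pi_rels \<tau>"
  shows "x + y \<in> pi_rels \<tau>"
  using assms(2)
proof induction
  case (add y a)
  then show ?case using pi_rels.add[OF add.IH, of a] by (simp add: add.assoc)
next
  case (sub y a)
  then show ?case using pi_rels.sub[OF sub.IH, of a] by (simp add: add_diff_eq)
qed (use assms in simp)

lemma pi_rels_uminus: "x \<in> pi_rels \<tau> \<Longrightarrow> - x \<in> pi_rels \<tau>"
proof (induction rule: pi_rels.induct)
  case (add x a)
  then show ?case using pi_rels.sub[OF add.IH, of a] by (simp add: algebra_simps)
next
  case (sub x a)
  then show ?case using pi_rels.add[OF sub.IH, of a] by (simp add: algebra_simps)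
qed (simp add: pi_rels.zero)

lemma pi_eq_refl: "pi_eq \<tau> x x"
  by (simp add: pi_eq_def pi_rels.zero)

lemma pi_eq_sym: "pi_eq \<tau> x y \<Longrightarrow> pi_eq \<tau> y x"
  unfolding pi_eq_def using pi_rels_uminus[of "x - y" \<tau>] by simp

lemma pi_eq_trans: "pi_eq \<tau> x y \<Longrightarrow> pi_eq \<tau> y z \<Longrightarrow> pi_eq \<tau> x z"
  unfolding pi_eq_def using pi_rels_add[of "x - y" \<tau> "y - z"] by simp

lemma pi_eq_uminus: "pi_eq \<tau> x y \<Longrightarrow> pi_eq \<tau> (- x) (- y)"
  unfolding pi_eq_def using pi_rels_uminus[of "x - y" \<tau>] by simp

fun apairing_iso_via ::
  "('a \<Rightarrow> 'a) \<Rightarrow> ('x \<Rightarrow> 'y) \<Rightarrow> ('x, 'a) apairing \<Rightarrow> ('y, 'a) apairing \<Rightarrow> bool" where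
  "apairing_iso_via \<tau> f (S, s, l, b) (S', s', l', b') \<longleftrightarrow>
     bij_betw f S S' \<and> f s = s' \<and> (\<forall>A\<in>S - {s}. l' (f A) = l A) \<and>
     (\<forall>A\<in>S. \<forall>B\<in>S. pi_eq \<tau> (b' (f A) (f B)) (b A B))"

lemma apairing_iso_iff_via: "apairing_iso \<tau> P Q \<longleftrightarrow> (\<exists>f. apairing_iso_via \<tau> f P Q)"
  by (cases P; cases Q) simp

lemma apairing_iso_refl: "apairing_iso \<tau> P P"
proof -
  have "apairing_iso_via \<tau> id P P" by (cases P) (simp add: pi_eq_refl)
  then show ?thesis unfolding apairing_iso_iff_via by blast
qed

lemma apairing_iso_via_inv:
  assumes "s \<in> S" "apairing_iso_via \<tau> f (S, s, l, b) (S', s', l', b')"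
  shows "apairing_iso_via \<tau> (inv_into S f) (S', s', l', b') (S, s, l, b)"
proof -
  let ?g = "inv_into S f"
  have f: "bij_betw f S S'" "f s = s'" "\<forall>A\<in>S - {s}. l' (f A) = l A"
      "\<forall>A\<in>S. \<forall>B\<in>S. pi_eq \<tau> (b' (f A) (f B)) (b A B)"
    using assms(2) by simp_all
  have g: "bij_betw ?g S' S" using f(1) by (rule bij_betw_inv_into)
  have fg: "f (?g A) = A" and gS: "?g A \<in> S" if "A \<in> S'" for A
    using f(1) that by (auto simp: bij_betw_def f_inv_into_f inv_into_into)
  have "?g s' = s" using f(1,2) assms(1) by (metis bij_betw_inv_into_left)
  moreover have "l (?g A) = l' A" if "A \<in> S' - {s'}" for A
    using f(2,3) fg gS that by force
  moreover have "pi_eq \<tau> (b (?g A) (?g B)) (b' A B)" if "A \<in> S'" "B \<in> S'" for A B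
    using f(4) fg gS that pi_eq_sym by metis
  ultimately show ?thesis using g by simp
qed

lemma apairing_iso_via_comp:
  assumes "s \<in> S" "apairing_iso_via \<tau> f (S, s, l, b) (S', s', l', b')"
    "apairing_iso_via \<tau> g (S', s', l', b') (S'', s'', l'', b'')"
  shows "apairing_iso_via \<tau> (g \<circ> f) (S, s, l, b) (S'', s'', l'', b'')"
proof -
  have f: "bij_betw f S S'" "f s = s'" "\<forall>A\<in>S - {s}. l' (f A) = l A"
      "\<forall>A\<in>S. \<forall>B\<in>S. pi_eq \<tau> (b' (f A) (f B)) (b A B)"
    using assms(2) by simp_all
  have g: "bij_betw g S' S''" "g s' = s''" "\<forall>A\<in>S' - {s'}. l'' (g A) = l' A"
      "\<forall>A\<in>S'. \<forall>B\<in>S'. pi_eq \<tau> (b'' (g A) (g B)) (b' A B)"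
    using assms(3) by simp_all
  have fS: "f A \<in> S'" if "A \<in> S" for A using f(1) that by (rule bij_betw_apply)
  have "f A \<noteq> s'" if "A \<in> S - {s}" for A
    using f(1,2) assms(1) that by (metis DiffE bij_betw_inv_into_left singletonI)
  then have "\<forall>A\<in>S - {s}. l'' (g (f A)) = l A" using f(3) g(3) fS by auto
  moreover have "pi_eq \<tau> (b'' (g (f A)) (g (f B))) (b A B)" if "A \<in> S" "B \<in> S" for A B
    using f(4) g(4) fS that pi_eq_trans by meson
  ultimately show ?thesis using bij_betw_trans[OF f(1) g(1)] f(2) g(2) by simp
qed

lemma apairing_iso_sym: "is_apairing \<tau> P \<Longrightarrow> apairing_iso \<tau> P Q \<Longrightarrow> apairing_iso \<tau> Q P"
  by (cases P; cases Q) (auto simp only: apairing_iso_iff_via is_apairing.simps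
      dest: apairing_iso_via_inv)

lemma apairing_iso_trans:
  "is_apairing \<tau> P \<Longrightarrow> apairing_iso \<tau> P Q \<Longrightarrow> apairing_iso \<tau> Q R \<Longrightarrow> apairing_iso \<tau> P R"
  by (cases P; cases Q; cases R) (auto simp only: apairing_iso_iff_via is_apairing.simps
      dest: apairing_iso_via_comp)

lemma apairing_iso_via_Diff:
  assumes "apairing_iso_via \<tau> f (S, s, l, b) (S', s', l', b')" "X \<subseteq> S - {s}"
  shows "apairing_iso_via \<tau> f (S - X, s, l, b) (S' - f ` X, s', l', b')"
proof -
  have "bij_betw f (S - X) (S' - f ` X)"
    using assms by (intro bij_betw_DiffI) (auto simp: bij_betw_def intro: inj_on_subset)
  then show ?thesis using assms(1) by auto
qed

lemma apairing_iso_via_annihilating: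
  assumes "s \<in> S" "apairing_iso_via \<tau> f (S, s, l, b) (S', s', l', b')"
    "annihilating \<tau> (S, s, l, b) A"
  shows "annihilating \<tau> (S', s', l', b') (f A)"
proof -
  have f: "bij_betw f S S'" "f s = s'" "\<forall>A\<in>S. \<forall>B\<in>S. pi_eq \<tau> (b' (f A) (f B)) (b A B)"
    using assms(2) by simp_all
  have A: "A \<in> S - {s}" "\<forall>C\<in>S. pi_eq \<tau> (b A C) 0" using assms(3) by simp_all
  have "f A \<in> S' - {s'}"
    using f(1,2) A(1) assms(1) by (auto simp: bij_betw_def inj_on_def)
  moreover have "pi_eq \<tau> (b' (f A) (f C)) 0" if "C \<in> S" for C
    using f(3) A that pi_eq_trans by blast
  ultimately show ?thesis using f(1) by (auto simp: bij_betw_def)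
qed

lemma apairing_iso_via_twins:
  assumes "s \<in> S" "apairing_iso_via \<tau> f (S, s, l, b) (S', s', l', b')"
    "twins \<tau> (S, s, l, b) A B"
  shows "twins \<tau> (S', s', l', b') (f A) (f B)"
proof -
  have f: "bij_betw f S S'" "f s = s'" "\<forall>A\<in>S - {s}. l' (f A) = l A"
      "\<forall>A\<in>S. \<forall>B\<in>S. pi_eq \<tau> (b' (f A) (f B)) (b A B)"
    using assms(2) by simp_all
  have AB: "A \<in> S - {s}" "B \<in> S - {s}" "A \<noteq> B" "l A = \<tau> (l B)"
      "\<forall>C\<in>S. pi_eq \<tau> (b A C) (b B C)"
    using assms(3) by simp_all
  have "f A \<in> S' - {s'}" "f B \<in> S' - {s'}" "f A \<noteq> f B"
    using f(1,2) AB(1-3) assms(1) by (auto simp: bij_betw_def inj_on_def)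
  moreover have "l' (f A) = \<tau> (l' (f B))" using f(3) AB by simp
  moreover have "pi_eq \<tau> (b' (f A) (f C)) (b' (f B) (f C))" if "C \<in> S" for C
    using f(4) AB that pi_eq_trans pi_eq_sym by (metis DiffD1)
  ultimately show ?thesis using f(1) by (auto simp: bij_betw_def)
qed

lemma apairing_move_M1:
  "annihilating \<tau> (S, s, l, b) A \<Longrightarrow> apairing_move \<tau> (S, s, l, b) (S - {A}, s, l, b)"
  unfolding apairing_move_def by (auto simp del: annihilating.simps)

lemma apairing_move_M2:
  "twins \<tau> (S, s, l, b) A B \<Longrightarrow> apairing_move \<tau> (S, s, l, b) (S - {A, B}, s, l, b)"
  unfolding apairing_move_def by (auto simp del: twins.simps)

lemma apairing_move_cases:
  assumes "apairing_move \<tau> (S, s, l, b) Q"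
  obtains A where "annihilating \<tau> (S, s, l, b) A" "Q = (S - {A}, s, l, b)"
  | A B where "twins \<tau> (S, s, l, b) A B" "Q = (S - {A, B}, s, l, b)"
  using assms unfolding apairing_move_def by (auto simp del: twins.simps annihilating.simps)

lemma apairing_move_is_apairing:
  "is_apairing \<tau> P \<Longrightarrow> apairing_move \<tau> P Q \<Longrightarrow> is_apairing \<tau> Q"
  by (cases P) (auto elim!: apairing_move_cases)

lemma apairing_move_card_less:
  assumes "is_apairing \<tau> P" "apairing_move \<tau> P Q"
  shows "card (fst Q) < card (fst P)"
proof -
  obtain S s l b where P: "P = (S, s, l, b)" by (cases P)
  have "finite S" using assms(1) P by simp
  from assms(2)[unfolded P] show ?thesis
  proof (cases rule: apairing_move_cases)
    case (1 A)
    then have "S - {A} \<subset> S" by auto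
    then show ?thesis using 1 P \<open>finite S\<close> by (simp only: fst_conv psubset_card_mono)
  next
    case (2 A B)
    then have "S - {A, B} \<subset> S" by auto
    then show ?thesis using 2 P \<open>finite S\<close> by (simp only: fst_conv psubset_card_mono)
  qed
qed

lemma primitive_iff_no_move: "primitive \<tau> P \<longleftrightarrow> (\<nexists>Q. apairing_move \<tau> P Q)"
  unfolding primitive_def
  by (cases P) (metis apairing_move_M1 apairing_move_M2 apairing_move_cases)

lemma apairing_iso_move:
  assumes "is_apairing \<tau> P" "apairing_iso \<tau> P P'" "apairing_move \<tau> P Q"
  shows "\<exists>Q'. apairing_move \<tau> P' Q' \<and> apairing_iso \<tau> Q Q'"
proof -
  obtain S s l b where P: "P = (S, s, l, b)" by (cases P)
  obtain S' s' l' b' where P': "P' = (S', s', l', b')" by (cases P')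
  obtain f where f: "apairing_iso_via \<tau> f (S, s, l, b) (S', s', l', b')"
    using assms(2) P P' apairing_iso_iff_via by blast
  have "s \<in> S" using assms(1) P by simp
  have restrict: "apairing_iso \<tau> (S - X, s, l, b) (S' - f ` X, s', l', b')" if "X \<subseteq> S - {s}" for X
    using apairing_iso_via_Diff[OF f that] apairing_iso_iff_via by blast
  from assms(3)[unfolded P] show ?thesis
  proof (cases rule: apairing_move_cases)
    case (1 A)
    have "apairing_move \<tau> P' (S' - f ` {A}, s', l', b')"
      using apairing_move_M1[OF apairing_iso_via_annihilating[OF \<open>s \<in> S\<close> f 1(1)]] P' by simp
    moreover have "A \<in> S - {s}" using 1 by simp
    ultimately show ?thesis using restrict[of "{A}"] 1 by blast
  next
    case (2 A B)
    have "apairing_move \<tau> P' (S' - f ` {A, B}, s', l', b')"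
      using apairing_move_M2[OF apairing_iso_via_twins[OF \<open>s \<in> S\<close> f 2(1)]] P' by simp
    moreover have "{A, B} \<subseteq> S - {s}" using 2 by simp
    ultimately show ?thesis using restrict[of "{A, B}"] 2 by blast
  qed
qed

section \<open>Local confluence\<close>

lemma annihilating_subset:
  "annihilating \<tau> (S, s, l, b) A \<Longrightarrow> A \<in> T \<Longrightarrow> T \<subseteq> S \<Longrightarrow> annihilating \<tau> (T, s, l, b) A"
  by auto

lemma twins_subset:
  "twins \<tau> (S, s, l, b) A B \<Longrightarrow> A \<in> T \<Longrightarrow> B \<in> T \<Longrightarrow> T \<subseteq> S \<Longrightarrow> twins \<tau> (T, s, l, b) A B"
  by auto

lemma twins_sym:
  assumes "\<And>a. \<tau> (\<tau> a) = a" "twins \<tau> P A B"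
  shows "twins \<tau> P B A"
  using assms by (cases P) (auto intro: pi_eq_sym)

lemma annihilating_Diff_twin:
  assumes "annihilating \<tau> (S, s, l, b) A" "twins \<tau> (S, s, l, b) A C"
  shows "annihilating \<tau> (S - {A}, s, l, b) C"
  using assms pi_eq_sym pi_eq_trans by simp blast

lemma apairing_iso_swap:
  assumes "is_apairing \<tau> (S, s, l, b)" "Y \<in> S - {s}" "Z \<in> S - {s}" "X \<noteq> Y" "X \<noteq> Z"
    and "l Y = l Z" "\<forall>C\<in>S. pi_eq \<tau> (b Y C) (b Z C)"
  shows "apairing_iso \<tau> (S - {X, Y}, s, l, b) (S - {X, Z}, s, l, b)"
proof -
  define f where "f = id(Y := Z, Z := Y)"
  have f_in: "f A \<in> S" if "A \<in> S" for A using assms(2,3) that by (simp add: f_def)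
  have row: "pi_eq \<tau> (b (f A) C) (b A C)" if "C \<in> S" for A C
    using assms(7) that by (auto simp: f_def pi_eq_refl intro: pi_eq_sym)
  have col: "pi_eq \<tau> (b C (f B)) (b C B)" if "B \<in> S" "C \<in> S" for B C
  proof -
    have skew: "pi_eq \<tau> (b D E) (- b E D)" if "D \<in> S" "E \<in> S" for D E
      using assms(1) that by simp
    have "pi_eq \<tau> (b C (f B)) (- b (f B) C)" using skew f_in that by blast
    moreover have "pi_eq \<tau> (- b (f B) C) (- b B C)" using row that by (blast intro: pi_eq_uminus)
    moreover have "pi_eq \<tau> (- b B C) (b C B)" using skew that by (blast intro: pi_eq_sym)
    ultimately show ?thesis by (blast intro: pi_eq_trans)
  qed
  have "bij_betw f (S - {X, Y}) (S - {X, Z})"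
    by (rule bij_betw_byWitness[where f' = f]) (use assms(2-5) in \<open>auto simp: f_def\<close>)
  moreover have "f s = s" "\<forall>A\<in>S - {X, Y} - {s}. l (f A) = l A"
    using assms(2,3,6) by (auto simp: f_def)
  moreover have "pi_eq \<tau> (b (f A) (f B)) (b A B)" if "A \<in> S" "B \<in> S" for A B
    using row[OF f_in] col that by (blast intro: pi_eq_trans)
  ultimately have "apairing_iso_via \<tau> f (S - {X, Y}, s, l, b) (S - {X, Z}, s, l, b)" by simp
  then show ?thesis using apairing_iso_iff_via by blast
qed

lemma annihilating_annihilating_join:
  assumes "annihilating \<tau> (S, s, l, b) A" "annihilating \<tau> (S, s, l, b) A'"
  shows "\<exists>R. (apairing_move \<tau>)\<^sup>*\<^sup>* (S - {A}, s, l, b) R \<and> (apairing_move \<tau>)\<^sup>*\<^sup>* (S - {A'}, s, l, b) R"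
proof (cases "A = A'")
  case False
  have "apairing_move \<tau> (S - {A}, s, l, b) (S - {A} - {A'}, s, l, b)"
    using assms False by (intro apairing_move_M1 annihilating_subset[OF assms(2)]) auto
  moreover have "apairing_move \<tau> (S - {A'}, s, l, b) (S - {A'} - {A}, s, l, b)"
    using assms False by (intro apairing_move_M1 annihilating_subset[OF assms(1)]) auto
  moreover have "S - {A'} - {A} = S - {A} - {A'}" by blast
  ultimately show ?thesis by (metis r_into_rtranclp)
qed blast

lemma annihilating_twins_join:
  assumes "\<And>a. \<tau> (\<tau> a) = a" "annihilating \<tau> (S, s, l, b) A" "twins \<tau> (S, s, l, b) B C"
  shows "\<exists>R. (apairing_move \<tau>)\<^sup>*\<^sup>* (S - {A}, s, l, b) R \<and> (apairing_move \<tau>)\<^sup>*\<^sup>* (S - {B, C}, s, l, b) R"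
proof (cases "A \<in> {B, C}")
  case True
  obtain C' where C': "twins \<tau> (S, s, l, b) A C'" "{B, C} = {A, C'}"
  proof (cases "A = B")
    case True
    then show thesis using that[of C] assms(3) by blast
  next
    case False
    then show thesis using that[of B] twins_sym[OF assms(1,3)] \<open>A \<in> {B, C}\<close> by blast
  qed
  have "apairing_move \<tau> (S - {A}, s, l, b) (S - {A} - {C'}, s, l, b)"
    by (rule apairing_move_M1[OF annihilating_Diff_twin[OF assms(2) C'(1)]])
  moreover have "S - {A} - {C'} = S - {B, C}" using C'(2) by blast
  ultimately show ?thesis by (metis rtranclp.rtrancl_refl r_into_rtranclp)
next
  case False
  have "apairing_move \<tau> (S - {A}, s, l, b) (S - {A} - {B, C}, s, l, b)"
    using assms False by (intro apairing_move_M2 twins_subset[OF assms(3)]) auto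
  moreover have "apairing_move \<tau> (S - {B, C}, s, l, b) (S - {B, C} - {A}, s, l, b)"
    using assms False by (intro apairing_move_M1 annihilating_subset[OF assms(2)]) auto
  moreover have "S - {B, C} - {A} = S - {A} - {B, C}" by blast
  ultimately show ?thesis by (metis r_into_rtranclp)
qed

lemma twins_overlap:
  assumes "\<And>a. \<tau> (\<tau> a) = a" "twins \<tau> P A B" "twins \<tau> P C D" "{A, B} \<inter> {C, D} \<noteq> {}"
  obtains X Y Z where "twins \<tau> P X Y" "{A, B} = {X, Y}" "twins \<tau> P X Z" "{C, D} = {X, Z}"
proof -
  have sym: "twins \<tau> P B A" "twins \<tau> P D C"
    using twins_sym[OF assms(1) assms(2)] twins_sym[OF assms(1) assms(3)] .
  consider "A = C" | "A = D" | "B = C" | "B = D" using assms(4) by blast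
  then show thesis
  proof cases
    case 1
    show thesis by (rule that[of A B D]) (use 1 assms(2,3) in simp_all)
  next
    case 2
    show thesis by (rule that[of A B C]) (use 2 assms(2) sym(2) in \<open>simp_all add: insert_commute\<close>)
  next
    case 3
    show thesis by (rule that[of B A D]) (use 3 sym(1) assms(3) in \<open>simp_all add: insert_commute\<close>)
  next
    case 4
    show thesis by (rule that[of B A C]) (use 4 sym in \<open>simp_all add: insert_commute\<close>)
  qed
qed

lemma twins_twins_join:
  assumes "\<And>a. \<tau> (\<tau> a) = a" "is_apairing \<tau> (S, s, l, b)"
    and "twins \<tau> (S, s, l, b) A B" "twins \<tau> (S, s, l, b) C D"
  shows "\<exists>R\<^sub>1 R\<^sub>2. (apairing_move \<tau>)\<^sup>*\<^sup>* (S - {A, B}, s, l, b) R\<^sub>1 \<and>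
    (apairing_move \<tau>)\<^sup>*\<^sup>* (S - {C, D}, s, l, b) R\<^sub>2 \<and> apairing_iso \<tau> R\<^sub>1 R\<^sub>2"
proof (cases "{A, B} \<inter> {C, D} = {}")
  case True
  have "apairing_move \<tau> (S - {A, B}, s, l, b) (S - {A, B} - {C, D}, s, l, b)"
    using assms True by (intro apairing_move_M2 twins_subset[OF assms(4)]) auto
  moreover have "apairing_move \<tau> (S - {C, D}, s, l, b) (S - {C, D} - {A, B}, s, l, b)"
    using assms True by (intro apairing_move_M2 twins_subset[OF assms(3)]) auto
  moreover have "S - {C, D} - {A, B} = S - {A, B} - {C, D}" by blast
  ultimately show ?thesis using apairing_iso_refl by (metis r_into_rtranclp)
next
  case False
  obtain X Y Z where XY: "twins \<tau> (S, s, l, b) X Y" "{A, B} = {X, Y}"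
    and XZ: "twins \<tau> (S, s, l, b) X Z" "{C, D} = {X, Z}"
    by (rule twins_overlap[OF assms(1,3,4) False])
  have "l X = \<tau> (l Y)" "l X = \<tau> (l Z)" using XY(1) XZ(1) by simp_all
  then have "l Y = l Z" by (metis assms(1))
  moreover have "pi_eq \<tau> (b Y E) (b Z E)" if "E \<in> S" for E
  proof -
    have "pi_eq \<tau> (b X E) (b Y E)" "pi_eq \<tau> (b X E) (b Z E)" using XY(1) XZ(1) that by simp_all
    then show ?thesis using pi_eq_sym pi_eq_trans by blast
  qed
  ultimately have "apairing_iso \<tau> (S - {X, Y}, s, l, b) (S - {X, Z}, s, l, b)"
    using XY(1) XZ(1) by (intro apairing_iso_swap[OF assms(2)]) auto
  then show ?thesis unfolding XY(2) XZ(2) by blast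
qed

lemma apairing_moves_locally_confluent:
  assumes "\<And>a. \<tau> (\<tau> a) = a" "is_apairing \<tau> P" "apairing_move \<tau> P P\<^sub>1" "apairing_move \<tau> P P\<^sub>2"
  shows "\<exists>R\<^sub>1 R\<^sub>2. (apairing_move \<tau>)\<^sup>*\<^sup>* P\<^sub>1 R\<^sub>1 \<and> (apairing_move \<tau>)\<^sup>*\<^sup>* P\<^sub>2 R\<^sub>2 \<and> apairing_iso \<tau> R\<^sub>1 R\<^sub>2"
proof -
  have common_reduct: "\<exists>R\<^sub>1 R\<^sub>2. (apairing_move \<tau>)\<^sup>*\<^sup>* Q\<^sub>1 R\<^sub>1 \<and> (apairing_move \<tau>)\<^sup>*\<^sup>* Q\<^sub>2 R\<^sub>2 \<and> apairing_iso \<tau> R\<^sub>1 R\<^sub>2"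
    if "\<exists>R. (apairing_move \<tau>)\<^sup>*\<^sup>* Q\<^sub>1 R \<and> (apairing_move \<tau>)\<^sup>*\<^sup>* Q\<^sub>2 R" for Q\<^sub>1 Q\<^sub>2
    using that apairing_iso_refl by blast
  obtain S s l b where P: "P = (S, s, l, b)" by (cases P)
  from assms(3)[unfolded P] show ?thesis
  proof (cases rule: apairing_move_cases)
    case P\<^sub>1: (1 A)
    from assms(4)[unfolded P] show ?thesis
    proof (cases rule: apairing_move_cases)
      case P\<^sub>2: (1 A')
      show ?thesis unfolding P\<^sub>1(2) P\<^sub>2(2)
        by (rule common_reduct, rule annihilating_annihilating_join) (fact P\<^sub>1(1) P\<^sub>2(1))+
    next
      case P\<^sub>2: (2 B C)
      show ?thesis unfolding P\<^sub>1(2) P\<^sub>2(2)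
        by (rule common_reduct, rule annihilating_twins_join[OF assms(1)]) (fact P\<^sub>1(1) P\<^sub>2(1))+
    qed
  next
    case P\<^sub>1: (2 A B)
    from assms(4)[unfolded P] show ?thesis
    proof (cases rule: apairing_move_cases)
      case P\<^sub>2: (1 A')
      have "\<exists>R. (apairing_move \<tau>)\<^sup>*\<^sup>* P\<^sub>2 R \<and> (apairing_move \<tau>)\<^sup>*\<^sup>* P\<^sub>1 R"
        unfolding P\<^sub>1(2) P\<^sub>2(2) by (rule annihilating_twins_join[OF assms(1) P\<^sub>2(1) P\<^sub>1(1)])
      then show ?thesis using common_reduct by blast
    next
      case P\<^sub>2: (2 C D)
      show ?thesis unfolding P\<^sub>1(2) P\<^sub>2(2)
        by (rule twins_twins_join[OF assms(1) assms(2)[unfolded P] P\<^sub>1(1) P\<^sub>2(1)])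
    qed
  qed
qed

lemma apairing_moves_terminating_locally_confluent_modulo_iso:
  assumes "\<And>a. \<tau> (\<tau> a) = a"
  shows "terminating_locally_confluent_modulo (is_apairing \<tau>) (apairing_move \<tau>)
    (apairing_iso \<tau>) (\<lambda>P. card (fst P))"
  by unfold_locales
    (blast intro: apairing_move_is_apairing apairing_move_card_less apairing_iso_refl
      apairing_iso_sym apairing_iso_trans apairing_iso_move
      apairing_moves_locally_confluent[OF assms])+

theorem lemma7p1:
  fixes \<tau> :: "'a \<Rightarrow> 'a"
  assumes "\<And>a. \<tau> (\<tau> a) = a"
  shows "(\<forall>P :: ('x, 'a) apairing. is_apairing \<tau> P \<longrightarrow>
            (\<exists>Q. (apairing_move \<tau>)\<^sup>*\<^sup>* P Q \<and> primitive \<tau> Q)) \<and>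
         (infinite (UNIV :: 'x set) \<longrightarrow>
           (\<forall>P Q :: ('x, 'a) apairing. is_apairing \<tau> P \<and> is_apairing \<tau> Q \<and>
              primitive \<tau> P \<and> primitive \<tau> Q \<and> homologous \<tau> P Q \<longrightarrow> apairing_iso \<tau> P Q))"
proof -
  interpret apairings: terminating_locally_confluent_modulo "is_apairing \<tau>" "apairing_move \<tau>"
      "apairing_iso \<tau>" "\<lambda>P. card (fst P)"
    by (rule apairing_moves_terminating_locally_confluent_modulo_iso[OF assms])
  have primitive: "primitive \<tau> P \<longleftrightarrow> apairings.normal P" for P :: "('x, 'a) apairing"
    by (simp add: primitive_iff_no_move apairings.normal_def)
  have homologous: "homologous \<tau> = (\<lambda>P Q. is_apairing \<tau> P \<and> is_apairing \<tau> Q \<and>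
      (apairing_move \<tau> P Q \<or> apairing_move \<tau> Q P \<or> apairing_iso \<tau> P Q))\<^sup>*\<^sup>*"
    unfolding homologous_def homology_step_def ..
  show ?thesis
    unfolding primitive homologous
    using apairings.normal_form_exists
      apairings.homologous_normal_forms_eqv[OF _ _ rtranclp.rtrancl_refl _ rtranclp.rtrancl_refl]
    by blast
qed

end
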